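(* Let $\mathcal{K}$ be a Hilbert space, let $A$ be a closable, densely defined operator in $\mathcal{K}$ with closure $\bar A$ and adjoint $A^*$, and let $A_0$ be an operator in $\mathcal{K}$ with $A_0\subseteq A^*$ (so $A_0$ is closable; $\bar A_0$ denotes its closure). Suppose there exists a sequence $(T_n)_{n=0}^\infty\subseteq\mathbf{B}(\mathcal{K})$ such that $T_n\to I_\mathcal{K}$ in the weak operator topology as $n\to\infty$, $$\mathcal{R}(T_n)\subseteq\mathcal{D}(\bar A),\qquad \mathcal{R}(T_n^* )\subseteq\mathcal{D}(\bar A_0),\qquad n\in\mathbb{N},$$ and $$\sup_{n\in\mathbb{N}}\|\bar AT_n-T_n\bar A\|<+\infty.$$ Then $\bar A_0=A^*$.
   Context: $\mathbf{B}(\mathcal{K})$ denotes the space of all bounded linear operators defined on the whole of $\mathcal{K}$. $\mathcal{D}(S)$ and $\mathcal{R}(S)$ denote the domain and range of an operator $S$. Sums and products of unbounded operators are taken with their natural (maximal) domains, e.g. $\mathcal{D}(\bar AT_n-T_n\bar A)=\{f\in\mathcal{D}(\bar A): T_nf\in\mathcal{D}(\bar A)\}$. For a (not necessarily everywhere defined) operator $S$, $\|S\|=\sup\{\|Sf\|: f\in\mathcal{D}(S),\ \|f\|\le 1\}$. *)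

theory Defs
  imports "HOL-Analysis.Analysis"
begin

text \<open>Unbounded (not necessarily everywhere defined) linear operators in a
Hilbert space are represented by their graphs, i.e. sets of pairs (x, Sx).\<close>

definition is_operator :: "('a::real_vector \<times> 'a) set \<Rightarrow> bool" where
  "is_operator G \<longleftrightarrow> subspace G \<and> (\<forall>x y z. (x,y) \<in> G \<and> (x,z) \<in> G \<longrightarrow> y = z)"

definition op_dom :: "('a \<times> 'a) set \<Rightarrow> 'a set" where
  "op_dom G = fst ` G"

definition op_ran :: "('a \<times> 'a) set \<Rightarrow> 'a set" where
  "op_ran G = snd ` G"

definition op_graph :: "('a \<Rightarrow> 'a) \<Rightarrow> ('a \<times> 'a) set" where
  "op_graph T = {(x, T x) | x. True}"

definition op_closure :: "('a::real_normed_vector \<times> 'a) set \<Rightarrow> ('a \<times> 'a) set" where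
  "op_closure G = closure G"

definition closable :: "('a::real_normed_vector \<times> 'a) set \<Rightarrow> bool" where
  "closable G \<longleftrightarrow> is_operator (closure G)"

definition densely_defined :: "('a::real_normed_vector \<times> 'a) set \<Rightarrow> bool" where
  "densely_defined G \<longleftrightarrow> closure (op_dom G) = UNIV"

definition op_adj :: "('a::real_inner \<times> 'a) set \<Rightarrow> ('a \<times> 'a) set" where
  "op_adj G = {(y,z). \<forall>(x,w) \<in> G. inner w y = inner x z}"

definition op_comp :: "('a \<times> 'a) set \<Rightarrow> ('a \<times> 'a) set \<Rightarrow> ('a \<times> 'a) set" where
  "op_comp G H = {(x,z). \<exists>y. (x,y) \<in> H \<and> (y,z) \<in> G}"

definition op_diff :: "('a::ab_group_add \<times> 'a) set \<Rightarrow> ('a \<times> 'a) set \<Rightarrow> ('a \<times> 'a) set" where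
  "op_diff G H = {(x, y - z) | x y z. (x,y) \<in> G \<and> (x,z) \<in> H}"

definition op_norm :: "('a::real_normed_vector \<times> 'a) set \<Rightarrow> ereal" where
  "op_norm G = (SUP p \<in> {p \<in> G. norm (fst p) \<le> 1}. ereal (norm (snd p)))"

end

theory Submission
  imports Defs
begin

text \<open>Let (y, z) lie in the graph of A*. By assumption u_n = T_n* y lies in the domain of
  the closure of A0; let v_n be its image. Testing against f in D(A) gives
  \<langle>f, v_n - T_n* z\<rangle> = \<langle>T_n g - h, y\<rangle> whenever (f, g) and (T_n f, h) lie in the graph of the
  closure of A, so the commutator bound makes the defects v_n - T_n* z uniformly bounded.
  As T_n \<rightarrow> I weakly, they tend to 0 weakly on the dense set D(A), hence weakly. Therefore
  (u_n, v_n) \<rightarrow> (y, z) weakly, and the graph of the closure of A0, being a closed subspace,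
  is weakly closed (by orthogonal projection), so it contains (y, z).\<close>

subsection \<open>Hilbert space facts\<close>

lemma parallelogram_law:
  fixes a b :: "'b::real_inner"
  shows "norm (a - b)^2 + norm (a + b)^2 = 2 * norm a^2 + 2 * norm b^2"
  by (simp add: power2_norm_eq_inner inner_diff inner_add algebra_simps inner_commute)

lemma subspace_closure:
  fixes S :: "'b::real_normed_vector set"
  assumes "subspace S"
  shows "subspace (closure S)"
proof -
  have "S + S \<subseteq> S"
    using assms by (auto elim!: set_plus_elim intro: subspace_add)
  then have add: "closure S + closure S \<subseteq> closure S"
    using closure_sum[of S S] closure_mono by blast
  have scale: "(*\<^sub>R) c ` closure S \<subseteq> closure S" for c
    using assms by (auto simp: closure_scaleR intro!: closure_mono subspace_scale)
  show ?thesis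
    unfolding subspace_def
    using add scale assms closure_subset subspace_0 by blast
qed

lemma midpoint_distance_estimate:
  fixes x a b :: "'b::real_inner"
  assumes "d \<le> norm (x - (1/2) *\<^sub>R (a + b))" and "0 \<le> d"
  shows "norm (a - b)^2 \<le> 2 * norm (x - a)^2 + 2 * norm (x - b)^2 - 4 * d^2"
proof -
  have "x - (1/2) *\<^sub>R (a + b) = (1/2) *\<^sub>R ((x - a) + (x - b))"
    by (simp add: algebra_simps flip: scaleR_add_left)
  then have "2 * d \<le> norm ((x - a) + (x - b))"
    using assms(1) by simp
  then have "4 * d^2 \<le> norm ((x - a) + (x - b))^2"
    using power_mono[of "2 * d" _ 2] assms(2) by (simp add: power_mult_distrib)
  moreover have "norm (a - b)^2 = norm ((x - a) - (x - b))^2"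
    by (simp add: norm_minus_commute)
  ultimately show ?thesis
    using parallelogram_law[of "x - a" "x - b"] by linarith
qed

lemma minimizing_sequence_Cauchy:
  fixes s :: "nat \<Rightarrow> 'b::real_inner"
  assumes "convex S" and s_in: "\<And>n. s n \<in> S" and d_le: "\<And>t. t \<in> S \<Longrightarrow> d \<le> norm (x - t)"
    and "0 \<le> d" and lim: "(\<lambda>n. norm (x - s n)) \<longlonglongrightarrow> d"
  shows "Cauchy s"
proof (rule metric_CauchyI)
  have "(\<lambda>n. norm (x - s n)^2 - d^2) \<longlonglongrightarrow> d^2 - d^2"
    by (intro tendsto_intros lim)
  then have excess: "(\<lambda>n. norm (x - s n)^2 - d^2) \<longlonglongrightarrow> 0"
    by simp
  fix e :: real assume "e > 0"
  then have "e^2 / 4 > 0" by simp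
  then obtain N where N: "\<And>n. n \<ge> N \<Longrightarrow> norm (x - s n)^2 - d^2 < e^2 / 4"
    using LIMSEQ_D[OF excess] by (metis abs_less_iff diff_zero real_norm_def)
  have "dist (s m) (s n) < e" if "m \<ge> N" "n \<ge> N" for m n
  proof -
    have "(1/2) *\<^sub>R (s m + s n) \<in> S"
      using convexD[OF assms(1) s_in s_in, of "1/2" "1/2"] by (simp add: scaleR_add_right)
    then have "norm (s m - s n)^2 \<le> 2 * norm (x - s m)^2 + 2 * norm (x - s n)^2 - 4 * d^2"
      by (intro midpoint_distance_estimate d_le \<open>0 \<le> d\<close>)
    also have "\<dots> < e^2"
      using N[OF \<open>m \<ge> N\<close>] N[OF \<open>n \<ge> N\<close>] by linarith
    finally show ?thesis
      using \<open>e > 0\<close> by (simp add: dist_norm power_less_imp_less_base)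
  qed
  then show "\<exists>M. \<forall>m\<ge>M. \<forall>n\<ge>M. dist (s m) (s n) < e" by blast
qed

lemma nearest_point_exists:
  fixes S :: "'b::{real_inner, complete_space} set"
  assumes "convex S" and "closed S" and "S \<noteq> {}"
  shows "\<exists>s\<in>S. \<forall>t\<in>S. norm (x - s) \<le> norm (x - t)"
proof -
  define d where "d = infdist x S"
  have d_nonneg: "0 \<le> d"
    by (simp add: d_def infdist_nonneg)
  have d_le: "d \<le> norm (x - t)" if "t \<in> S" for t
    using infdist_le[OF that, of x] by (simp add: d_def dist_norm)
  have "\<exists>s\<in>S. norm (x - s) < d + 1 / Suc n" for n
  proof -
    have "(INF t\<in>S. dist x t) < d + 1 / Suc n"
      using infdist_notempty[OF assms(3)] by (simp add: d_def)
    then show ?thesis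
      using assms(3) by (subst (asm) cINF_less_iff) (auto simp: dist_norm intro: bdd_belowI2[where m=0])
  qed
  then obtain s where s_in: "\<And>n. s n \<in> S" and s_near: "\<And>n. norm (x - s n) < d + 1 / Suc n"
    by metis
  have norm_lim: "(\<lambda>n. norm (x - s n)) \<longlonglongrightarrow> d"
  proof (rule real_tendsto_sandwich[where f="\<lambda>_. d" and h="\<lambda>n. d + 1 / Suc n"])
    show "(\<lambda>n. d + 1 / Suc n) \<longlonglongrightarrow> d"
      using tendsto_add[OF tendsto_const LIMSEQ_inverse_real_of_nat, of d]
      by (simp add: inverse_eq_divide)
  qed (use d_le s_in s_near in \<open>auto intro!: always_eventually less_imp_le\<close>)
  have "Cauchy s"
    by (rule minimizing_sequence_Cauchy[OF assms(1) s_in d_le d_nonneg norm_lim])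
  then obtain s0 where lim: "s \<longlonglongrightarrow> s0"
    using convergent_eq_Cauchy by blast
  have s0_in: "s0 \<in> S"
    using closed_sequentially[OF assms(2)] s_in lim by blast
  have "(\<lambda>n. norm (x - s n)) \<longlonglongrightarrow> norm (x - s0)"
    by (intro tendsto_intros lim)
  then have "norm (x - s0) = d"
    using LIMSEQ_unique norm_lim by blast
  then show ?thesis
    using s0_in d_le by auto
qed

lemma nearest_point_orthogonal:
  fixes S :: "'b::real_inner set"
  assumes "subspace S" and "s \<in> S" and nearest: "\<And>t. t \<in> S \<Longrightarrow> norm (x - s) \<le> norm (x - t)"
    and "t \<in> S"
  shows "inner (x - s) t = 0"
proof (cases "t = 0")
  case False
  define c where "c = inner (x - s) t"
  define l where "l = c / inner t t"
  have tt: "inner t t > 0"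
    using False by simp
  have "s + l *\<^sub>R t \<in> S"
    using assms by (simp add: subspace_add subspace_scale)
  then have "norm (x - s)^2 \<le> norm (x - (s + l *\<^sub>R t))^2"
    using nearest by (simp add: power_mono)
  also have "\<dots> = norm (x - s)^2 - 2 * l * c + l^2 * inner t t"
    by (simp only: power2_norm_eq_inner)
      (simp add: inner_diff inner_add inner_commute c_def power2_eq_square algebra_simps)
  also have "\<dots> = norm (x - s)^2 - c^2 / inner t t"
    using tt by (simp add: l_def power2_eq_square field_simps)
  finally have "c^2 / inner t t \<le> 0" by simp
  then show ?thesis
    using tt by (simp add: c_def divide_le_0_iff)
qed simp

lemma orthogonal_projection_exists:
  fixes S :: "'b::{real_inner, complete_space} set"
  assumes "subspace S" and "closed S"
  obtains s where "s \<in> S" and "\<And>t. t \<in> S \<Longrightarrow> inner (x - s) t = 0"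
proof -
  have "S \<noteq> {}"
    using assms(1) subspace_0 by blast
  then obtain s where "s \<in> S" "\<forall>t\<in>S. norm (x - s) \<le> norm (x - t)"
    using nearest_point_exists[OF subspace_imp_convex[OF assms(1)] assms(2)] by blast
  then show thesis
    using that nearest_point_orthogonal[OF assms(1)] by blast
qed

lemma closed_subspace_weak_limit:
  fixes S :: "'b::{real_inner, complete_space} set"
  assumes "subspace S" and "closed S" and x_in: "\<And>n. x n \<in> S"
    and weak: "\<And>w. (\<lambda>n. inner (x n) w) \<longlonglongrightarrow> inner y w"
  shows "y \<in> S"
proof -
  obtain s where "s \<in> S" and orth: "\<And>t. t \<in> S \<Longrightarrow> inner (y - s) t = 0"
    using orthogonal_projection_exists[OF assms(1,2)] by blast
  have "(\<lambda>n. inner (x n) (y - s)) = (\<lambda>n. 0)"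
    using orth[OF x_in] by (simp add: inner_commute)
  then have "inner y (y - s) = 0"
    using weak[of "y - s"] by (simp add: LIMSEQ_const_iff)
  moreover have "inner s (y - s) = 0"
    using orth[OF \<open>s \<in> S\<close>] by (simp add: inner_commute)
  ultimately have "inner (y - s) (y - s) = 0"
    by (simp add: inner_diff_left)
  then show ?thesis
    using \<open>s \<in> S\<close> by simp
qed

lemma riesz_representation:
  fixes f :: "'b::{real_inner, complete_space} \<Rightarrow> real"
  assumes "bounded_linear f"
  obtains r where "\<And>x. f x = inner x r"
proof (cases "\<forall>x. f x = 0")
  case True
  then show thesis
    using that[of 0] by simp
next
  case False
  then obtain x0 where x0: "f x0 \<noteq> 0" by blast
  interpret f: bounded_linear f by (rule assms)
  have "subspace {x. f x = 0}"
    unfolding subspace_def by (simp add: f.add f.scale f.zero)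
  moreover have "closed {x. f x = 0}"
    by (intro closed_Collect_eq continuous_intros f.continuous_on)
  ultimately obtain s where "f s = 0" and orth: "\<And>t. f t = 0 \<Longrightarrow> inner (x0 - s) t = 0"
    by (rule orthogonal_projection_exists[where x = x0]) auto
  \<comment> \<open>The representer is a multiple of the component of x0 orthogonal to the kernel.\<close>
  define e where "e = x0 - s"
  have fe: "f e = f x0"
    using \<open>f s = 0\<close> by (simp add: e_def f.diff)
  have "inner e e \<noteq> 0"
    using fe x0 by auto
  have "f x = inner x ((f e / inner e e) *\<^sub>R e)" for x
  proof -
    have "f (x - (f x / f e) *\<^sub>R e) = 0"
      using fe x0 by (simp add: f.diff f.scale)
    then have "inner e (x - (f x / f e) *\<^sub>R e) = 0"
      using orth e_def by blast
    then have "inner e x = (f x / f e) * inner e e"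
      by (simp add: inner_diff_right)
    then show ?thesis
      using \<open>inner e e \<noteq> 0\<close> fe x0 by (simp add: inner_commute field_simps)
  qed
  then show thesis
    by (rule that)
qed

lemma bounded_linear_adjoint_exists:
  fixes T :: "'b::{real_inner, complete_space} \<Rightarrow> 'b"
  assumes "bounded_linear T"
  shows "\<exists>T'. \<forall>x y. inner (T x) y = inner x (T' y)"
proof -
  have "\<forall>y. \<exists>r. \<forall>x. inner (T x) y = inner x r"
    using riesz_representation[OF bounded_linear_inner_left_comp[OF assms]] by metis
  then show ?thesis
    using choice[of "\<lambda>y r. \<forall>x. inner (T x) y = inner x r"] by blast
qed

lemma norm_le_of_dense_inner_bound:
  fixes e :: "'b::real_inner"
  assumes "closure D = UNIV" and "0 \<le> B"
    and bound: "\<And>f. f \<in> D \<Longrightarrow> \<bar>inner f e\<bar> \<le> B * norm f"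
  shows "norm e \<le> B"
proof -
  have "closed {f. \<bar>inner f e\<bar> \<le> B * norm f}"
    by (intro closed_Collect_le continuous_intros)
  then have "closure D \<subseteq> {f. \<bar>inner f e\<bar> \<le> B * norm f}"
    using bound by (intro closure_minimal) auto
  then have "\<bar>inner e e\<bar> \<le> B * norm e"
    using assms(1) by blast
  then have "inner e e \<le> B * norm e"
    by simp
  moreover have "inner e e = norm e * norm e"
    using power2_norm_eq_inner[of e] by (simp add: power2_eq_square)
  ultimately have "norm e * norm e \<le> B * norm e"
    by simp
  then show ?thesis
    using \<open>0 \<le> B\<close> by (cases "e = 0") (auto simp: mult_le_cancel_right)
qed

lemma weak_null_of_dense:
  fixes e :: "nat \<Rightarrow> 'b::real_inner"
  assumes "closure D = UNIV" and bounded: "\<And>n. norm (e n) \<le> B"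
    and null: "\<And>f. f \<in> D \<Longrightarrow> (\<lambda>n. inner f (e n)) \<longlonglongrightarrow> 0"
  shows "(\<lambda>n. inner q (e n)) \<longlonglongrightarrow> 0"
proof (rule LIMSEQ_I)
  fix r :: real assume "r > 0"
  define \<delta> where "\<delta> = r / (2 * (\<bar>B\<bar> + 1))"
  have "\<delta> > 0"
    using \<open>r > 0\<close> by (simp add: \<delta>_def)
  moreover have "q \<in> closure D"
    using assms(1) by simp
  ultimately obtain f where "f \<in> D" and "dist f q < \<delta>"
    unfolding closure_approachable by blast
  have "norm (q - f) * \<bar>B\<bar> \<le> \<delta> * \<bar>B\<bar>"
    using \<open>dist f q < \<delta>\<close> by (intro mult_right_mono) (auto simp: dist_norm norm_minus_commute)
  also have "\<dots> \<le> r / 2"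
    using \<open>r > 0\<close> by (simp add: \<delta>_def field_simps)
  finally have close: "norm (q - f) * \<bar>B\<bar> \<le> r / 2" .
  obtain N where N: "\<And>n. n \<ge> N \<Longrightarrow> \<bar>inner f (e n)\<bar> < r / 2"
    using LIMSEQ_D[OF null[OF \<open>f \<in> D\<close>], of "r / 2"] \<open>r > 0\<close> by auto
  have "\<bar>inner q (e n)\<bar> < r" if "n \<ge> N" for n
  proof -
    have "norm (e n) \<le> \<bar>B\<bar>"
      using bounded[of n] by linarith
    then have "\<bar>inner (q - f) (e n)\<bar> \<le> norm (q - f) * \<bar>B\<bar>"
      using Cauchy_Schwarz_ineq2[of "q - f" "e n"] mult_left_mono[of "norm (e n)" "\<bar>B\<bar>" "norm (q - f)"]
      by simp
    moreover have "inner q (e n) = inner (q - f) (e n) + inner f (e n)"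
      by (simp add: inner_diff_left)
    ultimately show ?thesis
      using N[OF that] close abs_triangle_ineq[of "inner (q - f) (e n)" "inner f (e n)"] by linarith
  qed
  then show "\<exists>N. \<forall>n\<ge>N. norm (inner q (e n) - 0) < r"
    by auto
qed

subsection \<open>Operators given by their graphs\<close>

lemma mem_op_dom_iff: "x \<in> op_dom G \<longleftrightarrow> (\<exists>y. (x, y) \<in> G)"
  unfolding op_dom_def by force

lemma mem_op_ran_iff: "y \<in> op_ran G \<longleftrightarrow> (\<exists>x. (x, y) \<in> G)"
  unfolding op_ran_def by force

lemma op_ran_op_graph: "T x \<in> op_ran (op_graph T)"
  unfolding mem_op_ran_iff op_graph_def by blast

lemma op_ran_op_adj_op_graph:
  assumes "\<And>x. inner (T x) y = inner x w"
  shows "w \<in> op_ran (op_adj (op_graph T))"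
proof -
  have "(y, w) \<in> op_adj (op_graph T)"
    unfolding op_adj_def op_graph_def using assms by auto
  then show ?thesis
    unfolding mem_op_ran_iff by blast
qed

lemma closed_op_adj: "closed (op_adj (G :: ('b::real_inner \<times> 'b) set))"
proof -
  have "op_adj G = (\<Inter>p\<in>G. {q. inner (snd p) (fst q) = inner (fst p) (snd q)})"
    unfolding op_adj_def by fastforce
  then show ?thesis
    by (simp add: closed_INT closed_Collect_eq continuous_intros)
qed

lemma op_adj_inner_closure:
  fixes G :: "('b::real_inner \<times> 'b) set"
  assumes "(f, g) \<in> closure G" and "(u, v) \<in> op_adj G"
  shows "inner g u = inner f v"
proof -
  have "closure G \<subseteq> {p. inner (snd p) u = inner (fst p) v}"
    using assms(2) unfolding op_adj_def
    by (intro closure_minimal closed_Collect_eq continuous_intros) auto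
  then show ?thesis
    using assms(1) by auto
qed

lemma op_norm_ge:
  assumes "(x, y) \<in> G" and "norm x \<le> 1"
  shows "ereal (norm y) \<le> op_norm G"
  unfolding op_norm_def using assms by (force intro: SUP_upper2)

lemma norm_le_op_norm_of_scaled:
  fixes G :: "('b::real_normed_vector \<times> 'b) set"
  assumes "op_norm G \<le> ereal M" and scaled: "\<And>c. (c *\<^sub>R x, c *\<^sub>R y) \<in> G"
  shows "norm y \<le> M * norm x"
proof -
  have bound: "\<bar>c\<bar> * norm y \<le> M" if "\<bar>c\<bar> * norm x \<le> 1" for c
    using order_trans[OF op_norm_ge[OF scaled, of c] assms(1)] that by simp
  show ?thesis
  proof (cases "x = 0")
    case True
    \<comment> \<open>Then every multiple of y is bounded by M, so y = 0.\<close>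
    have "(\<bar>M\<bar> + 1) / norm y * norm y \<le> M" if "y \<noteq> 0"
      using bound[of "(\<bar>M\<bar> + 1) / norm y"] True by simp
    then show ?thesis
      using True by (cases "y = 0") auto
  next
    case False
    then show ?thesis
      using bound[of "1 / norm x"] by (simp add: field_simps)
  qed
qed

lemma commutator_bound:
  fixes A :: "('b::real_normed_vector \<times> 'b) set"
  assumes "subspace (closure A)" and "linear T"
    and "op_norm (op_diff (op_comp (op_closure A) (op_graph T))
                          (op_comp (op_graph T) (op_closure A))) \<le> ereal M"
    and fg: "(f, g) \<in> closure A" and h: "(T f, h) \<in> closure A"
  shows "norm (h - T g) \<le> M * norm f"
proof (rule norm_le_op_norm_of_scaled[OF assms(3)])
  fix c
  have "(c *\<^sub>R f, c *\<^sub>R g) \<in> closure A" and "(T (c *\<^sub>R f), c *\<^sub>R h) \<in> closure A"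
    using subspace_scale[OF assms(1) fg, of c] subspace_scale[OF assms(1) h, of c] \<open>linear T\<close>
    by (simp_all add: linear_scale)
  moreover have "c *\<^sub>R (h - T g) = c *\<^sub>R h - T (c *\<^sub>R g)"
    using \<open>linear T\<close> by (simp add: linear_scale algebra_simps)
  ultimately show "(c *\<^sub>R f, c *\<^sub>R (h - T g))
      \<in> op_diff (op_comp (op_closure A) (op_graph T)) (op_comp (op_graph T) (op_closure A))"
    unfolding op_diff_def op_comp_def op_graph_def op_closure_def by fastforce
qed

lemma SUP_less_PInf_obtain_bound:
  fixes f :: "'i \<Rightarrow> ereal"
  assumes "(SUP i\<in>I. f i) < \<infinity>"
  obtains M :: real where "0 \<le> M" and "\<And>i. i \<in> I \<Longrightarrow> f i \<le> ereal M"
proof -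
  obtain N :: nat where "(SUP i\<in>I. f i) < ereal (real N)"
    using assms less_PInf_Ex_of_nat by auto
  moreover have "f i \<le> (SUP i\<in>I. f i)" if "i \<in> I" for i
    using that by (rule SUP_upper)
  ultimately show thesis
    using that[of "real N"] by (meson less_imp_le of_nat_0_le_iff order_trans)
qed

subsection \<open>The approximation argument\<close>

locale bounded_commutator_approximation =
  fixes A A0 :: "('a::{real_inner, complete_space} \<times> 'a) set"
    and T T' :: "nat \<Rightarrow> 'a \<Rightarrow> 'a"
    and M :: real
  assumes dense: "closure (op_dom A) = UNIV"
    and subspace_A0: "subspace A0"
    and A0_subset: "A0 \<subseteq> op_adj A"
    and adjoint: "\<And>n x y. inner (T n x) y = inner x (T' n y)"
    and weak_identity: "\<And>x y. (\<lambda>n. inner (T n x) y) \<longlonglongrightarrow> inner x y"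
    and range: "\<And>n x. T n x \<in> op_dom (closure A)"
    and adjoint_range: "\<And>n y. T' n y \<in> op_dom (closure A0)"
    and M_nonneg: "0 \<le> M"
    and commutator: "\<And>n f g h. (f, g) \<in> closure A \<Longrightarrow> (T n f, h) \<in> closure A \<Longrightarrow>
                       norm (h - T n g) \<le> M * norm f"
begin

lemma closure_A0_subset: "closure A0 \<subseteq> op_adj A"
  using A0_subset closed_op_adj by (rule closure_minimal)

text \<open>For (y, z) in A* and v the image of T' n y under the closure of A0, the defect
  v - T' n z is the adjoint commutator applied to y: it equals (A0 T_n* - T_n* A*) y.\<close>

lemma defect_inner:
  assumes "(f, g) \<in> closure A" and "(T' n y, v) \<in> closure A0"
  shows "inner f (v - T' n z) = inner (T n g) y - inner (T n f) z"
proof -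
  have "inner g (T' n y) = inner f v"
    using op_adj_inner_closure[OF assms(1)] assms(2) closure_A0_subset by blast
  then show ?thesis
    by (simp add: adjoint inner_diff_right)
qed

lemma defect_norm_le:
  assumes yz: "(y, z) \<in> op_adj A" and v: "(T' n y, v) \<in> closure A0"
  shows "norm (v - T' n z) \<le> M * norm y"
proof (rule norm_le_of_dense_inner_bound[OF dense])
  show "0 \<le> M * norm y"
    using M_nonneg by simp
  fix f assume "f \<in> op_dom A"
  then obtain g where fg: "(f, g) \<in> closure A"
    using closure_subset unfolding mem_op_dom_iff by blast
  obtain h where h: "(T n f, h) \<in> closure A"
    using range unfolding mem_op_dom_iff by blast
  have "inner f (v - T' n z) = - inner (h - T n g) y"
    using defect_inner[OF fg v] op_adj_inner_closure[OF h yz] by (simp add: inner_diff_left)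
  then have "\<bar>inner f (v - T' n z)\<bar> \<le> norm (h - T n g) * norm y"
    using Cauchy_Schwarz_ineq2[of "h - T n g" y] by simp
  also have "\<dots> \<le> M * norm f * norm y"
    using commutator[OF fg h] by (simp add: mult_right_mono)
  finally show "\<bar>inner f (v - T' n z)\<bar> \<le> M * norm y * norm f"
    by (simp add: algebra_simps)
qed

lemma defect_weakly_null:
  assumes yz: "(y, z) \<in> op_adj A" and v: "\<And>n. (T' n y, v n) \<in> closure A0"
  shows "(\<lambda>n. inner q (v n - T' n z)) \<longlonglongrightarrow> 0"
proof (rule weak_null_of_dense[OF dense])
  show "norm (v n - T' n z) \<le> M * norm y" for n
    by (rule defect_norm_le[OF yz v])
  fix f assume "f \<in> op_dom A"
  then obtain g where fg: "(f, g) \<in> A"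
    unfolding mem_op_dom_iff by blast
  then have "inner g y = inner f z"
    using yz unfolding op_adj_def by auto
  moreover have "(\<lambda>n. inner (T n g) y - inner (T n f) z) \<longlonglongrightarrow> inner g y - inner f z"
    by (intro tendsto_diff weak_identity)
  ultimately show "(\<lambda>n. inner f (v n - T' n z)) \<longlonglongrightarrow> 0"
    using defect_inner[OF closure_subset[THEN subsetD, OF fg] v] by simp
qed

lemma op_adj_subset_closure: "op_adj A \<subseteq> closure A0"
proof clarify
  fix y z assume yz: "(y, z) \<in> op_adj A"
  have "\<forall>n. \<exists>w. (T' n y, w) \<in> closure A0"
    using adjoint_range by (simp add: mem_op_dom_iff)
  then obtain v where v: "\<And>n. (T' n y, v n) \<in> closure A0"
    by metis
  have "(\<lambda>n. inner (T' n y, v n) w) \<longlonglongrightarrow> inner (y, z) w" for w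
  proof (cases w)
    case (Pair p q)
    have "(\<lambda>n. inner (T n p) y + (inner (T n q) z + inner q (v n - T' n z)))
        \<longlonglongrightarrow> inner p y + (inner q z + 0)"
      by (intro tendsto_add weak_identity defect_weakly_null[OF yz v])
    moreover have "inner (T' n y, v n) (p, q)
        = inner (T n p) y + (inner (T n q) z + inner q (v n - T' n z))" for n
      by (simp add: adjoint inner_commute[of "T' n y"] inner_commute[of "v n"] inner_diff_right)
    moreover have "inner (y, z) (p, q) = inner p y + (inner q z + 0)"
      by (simp add: inner_commute)
    ultimately show ?thesis
      using Pair by presburger
  qed
  then show "(y, z) \<in> closure A0"
    by (rule closed_subspace_weak_limit[OF subspace_closure[OF subspace_A0] closed_closure v])
qed

lemma closure_eq_op_adj: "closure A0 = op_adj A"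
  using closure_A0_subset op_adj_subset_closure by (rule subset_antisym)

end

theorem theorem1:
  fixes A A0 :: "('a::{real_inner, complete_space} \<times> 'a) set"
    and T :: "nat \<Rightarrow> 'a \<Rightarrow> 'a"
  assumes A_op: "is_operator A"
    and A_closable: "closable A"
    and A_dense: "densely_defined A"
    and A0_op: "is_operator A0"
    and A0_sub: "A0 \<subseteq> op_adj A"
    and T_bounded: "\<And>n. bounded_linear (T n)"
    and T_wot: "\<And>x y. (\<lambda>n. inner (T n x) y) \<longlonglongrightarrow> inner x y"
    and T_ran: "\<And>n. op_ran (op_graph (T n)) \<subseteq> op_dom (op_closure A)"
    and T_adj_ran: "\<And>n. op_ran (op_adj (op_graph (T n))) \<subseteq> op_dom (op_closure A0)"
    and comm_bdd: "(SUP n. op_norm (op_diff (op_comp (op_closure A) (op_graph (T n)))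
                                        (op_comp (op_graph (T n)) (op_closure A)))) < \<infinity>"
  shows "op_closure A0 = op_adj A"
proof -
  have "\<forall>n. \<exists>T'. \<forall>x y. inner (T n x) y = inner x (T' y)"
    by (intro allI bounded_linear_adjoint_exists T_bounded)
  then have "\<exists>T'. \<forall>n x y. inner (T n x) y = inner x (T' n y)"
    by (rule choice)
  then obtain T' where adjoint: "\<And>n x y. inner (T n x) y = inner x (T' n y)"
    by blast
  define C where "C n = op_diff (op_comp (op_closure A) (op_graph (T n)))
                               (op_comp (op_graph (T n)) (op_closure A))" for n
  have "(SUP n. op_norm (C n)) < \<infinity>"
    using comm_bdd by (simp add: C_def)
  then obtain M where "0 \<le> M" and M: "\<And>n. op_norm (C n) \<le> ereal M"
    by (rule SUP_less_PInf_obtain_bound) auto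
  have "subspace (closure A)"
    using A_op by (simp add: is_operator_def subspace_closure)
  interpret bounded_commutator_approximation A A0 T T' M
  proof
    show "T n x \<in> op_dom (closure A)" for n x
      using T_ran[of n] op_ran_op_graph[of "T n"] by (auto simp: op_closure_def)
    show "T' n y \<in> op_dom (closure A0)" for n y
      using T_adj_ran[of n] op_ran_op_adj_op_graph[of "T n" y "T' n y"] adjoint
      by (auto simp: op_closure_def)
    show "norm (h - T n g) \<le> M * norm f"
      if "(f, g) \<in> closure A" and "(T n f, h) \<in> closure A" for n f g h
      using commutator_bound[OF \<open>subspace (closure A)\<close> bounded_linear.linear[OF T_bounded]
          M[unfolded C_def] that] .
    show "closure (op_dom A) = UNIV"
      using A_dense by (simp add: densely_defined_def)
    show "subspace A0"
      using A0_op by (simp add: is_operator_def)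
  qed (fact A0_sub adjoint T_wot \<open>0 \<le> M\<close>)+
  show ?thesis
    using closure_eq_op_adj by (simp add: op_closure_def)
qed

end
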